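(* Let $L>0$, let $\rho_1,\rho_2,b,k,k_0>0$ and $\ell>0$, and assume the structural assumptions on $F$ listed in the context (in particular $F\ge -\beta(u^2+v^2+w^2)-m_F$ with $0\le\beta<\pi^2/(2\gamma_3L^2)$). Then there exists a constant $\beta_0>0$ such that, along every solution $(\varphi,\psi,w)$ of the Bresse system (with Dirichlet boundary conditions), $$\mathcal{E}_{\ell}(t)\ \ge\ \beta_0\,E_{\ell}(t)-L\,m_F\qquad\text{for all } t\ge 0 .$$ In addition, if $\ell\in(0,\pi/(2L))$, then $\beta_0$ is independent of $\ell$.
   Context: Norms: $\|\cdot\|$ is the $L^2(0,L)$ norm. The Bresse system on $(0,L)\times\mathbb{R}^+$ is $\rho_1\varphi_{tt}-k(\varphi_x+\psi+\ell w)_x-k_0\ell(w_x-\ell\varphi)+g_1(\varphi_t)+f_1(\varphi,\psi,w)=0$, $\rho_2\psi_{tt}-b\psi_{xx}+k(\varphi_x+\psi+\ell w)+g_2(\psi_t)+f_2(\varphi,\psi,w)=0$, $\rho_1 w_{tt}-k_0(w_x-\ell\varphi)_x+k\ell(\varphi_x+\psi+\ell w)+g_3(w_t)+f_3(\varphi,\psi,w)=0$, with $\varphi=\psi=w=0$ at $x=0$ and $x=L$. For $y=(\varphi,\psi,w,\tilde\varphi,\tilde\psi,\tilde w)\in H^1_0(0,L)^3\times L^2(0,L)^3$ set $\|y\|_{\mathcal{H}_\ell}^2=\rho_1\|\tilde\varphi\|^2+\rho_2\|\tilde\psi\|^2+\rho_1\|\tilde w\|^2+b\|\psi_x\|^2+k\|\varphi_x+\psi+\ell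 w\|^2+k_0\|w_x-\ell\varphi\|^2$. Let $\gamma_3>0$ be a constant such that $\|\varphi_x\|^2+\|\psi_x\|^2+\|w_x\|^2\le\gamma_3\big(b\|\psi_x\|^2+k\|\varphi_x+\psi+\ell w\|^2+k_0\|w_x-\ell\varphi\|^2\big)$ for all $\varphi,\psi,w\in H^1_0(0,L)$ (for $\ell$ in an interval $[0,\ell_0]$ with $\ell_0<\pi/(2L)$ such a constant can be chosen independently of $\ell$). Assumptions on $F$: $F\in C^2(\mathbb{R}^3)$, $(f_1,f_2,f_3)=\nabla F$, and there are $\beta,m_F\ge0$ with $0\le\beta<\pi^2/(2\gamma_3L^2)$ such that $F(u,v,w)\ge-\beta(|u|^2+|v|^2+|w|^2)-m_F$ for all $u,v,w\in\mathbb{R}$. Energies along a solution: $E_\ell(t)=\tfrac12\|(\varphi,\psi,w,\varphi_t,\psi_t,w_t)(t)\|_{\mathcal{H}_\ell}^2$ and $\mathcal{E}_\ell(t)=E_\ell(t)+\int_0^LF(\varphi,\psi,w)\,dx$. *)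

theory Defs
  imports "HOL-Analysis.Analysis"
begin

definition sqn :: "real \<Rightarrow> (real \<Rightarrow> real) \<Rightarrow> real" where
  "sqn L f = integral {0..L} (\<lambda>x. (f x)^2)"

definition ipL :: "real \<Rightarrow> (real \<Rightarrow> real) \<Rightarrow> (real \<Rightarrow> real) \<Rightarrow> real" where
  "ipL L f g = integral {0..L} (\<lambda>x. f x * g x)"

definition sq_int :: "real \<Rightarrow> (real \<Rightarrow> real) \<Rightarrow> bool" where
  "sq_int L f \<longleftrightarrow> f measurable_on {0..L} \<and> (\<lambda>x. (f x)^2) integrable_on {0..L}"

text \<open>u is (the continuous representative of) an element of H^1_0(0,L) with weak derivative u':
  u' in L2(0,L), u(x) = integral of u' over [0,x] (so u(0)=0), and u(L)=0.\<close>
definition H10 :: "real \<Rightarrow> (real \<Rightarrow> real) \<Rightarrow> (real \<Rightarrow> real) \<Rightarrow> bool" where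
  "H10 L u u' \<longleftrightarrow> sq_int L u' \<and> u' absolutely_integrable_on {0..L}
      \<and> (\<forall>x\<in>{0..L}. u x = integral {0..x} u') \<and> u L = 0"

definition gamma3_ok :: "real \<Rightarrow> real \<Rightarrow> real \<Rightarrow> real \<Rightarrow> real \<Rightarrow> real \<Rightarrow> bool" where
  "gamma3_ok L b k k0 ell \<gamma>3 \<longleftrightarrow>
     (\<forall>\<phi> \<psi> w \<phi>x \<psi>x wx. H10 L \<phi> \<phi>x \<and> H10 L \<psi> \<psi>x \<and> H10 L w wx \<longrightarrow>
        sqn L \<phi>x + sqn L \<psi>x + sqn L wx
          \<le> \<gamma>3 * (b * sqn L \<psi>x + k * sqn L (\<lambda>x. \<phi>x x + \<psi> x + ell * w x)
                   + k0 * sqn L (\<lambda>x. wx x - ell * \<phi> x)))"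

definition bresse_E :: "real \<Rightarrow> real \<Rightarrow> real \<Rightarrow> real \<Rightarrow> real \<Rightarrow> real \<Rightarrow> real \<Rightarrow>
    (real \<Rightarrow> real) \<Rightarrow> (real \<Rightarrow> real) \<Rightarrow> (real \<Rightarrow> real) \<Rightarrow>
    (real \<Rightarrow> real) \<Rightarrow> (real \<Rightarrow> real) \<Rightarrow> (real \<Rightarrow> real) \<Rightarrow>
    (real \<Rightarrow> real) \<Rightarrow> (real \<Rightarrow> real) \<Rightarrow> (real \<Rightarrow> real) \<Rightarrow> real" where
  "bresse_E L \<rho>1 \<rho>2 b k k0 ell \<phi> \<psi> w \<phi>x \<psi>x wx \<phi>t \<psi>t wt =
     1/2 * (\<rho>1 * sqn L \<phi>t + \<rho>2 * sqn L \<psi>t + \<rho>1 * sqn L wt + b * sqn L \<psi>x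
            + k * sqn L (\<lambda>x. \<phi>x x + \<psi> x + ell * w x) + k0 * sqn L (\<lambda>x. wx x - ell * \<phi> x))"

text \<open>Weak (variational) solution on [0,oo) of the Bresse system with Dirichlet boundary conditions.
  Components are functions of (t, x); phix etc. are spatial weak derivatives, phit etc. velocities.\<close>
definition bresse_solution ::
  "real \<Rightarrow> real \<Rightarrow> real \<Rightarrow> real \<Rightarrow> real \<Rightarrow> real \<Rightarrow> real \<Rightarrow>
   (real \<times> real \<times> real \<Rightarrow> real) \<Rightarrow> (real \<times> real \<times> real \<Rightarrow> real) \<Rightarrow> (real \<times> real \<times> real \<Rightarrow> real) \<Rightarrow>
   (real \<Rightarrow> real) \<Rightarrow> (real \<Rightarrow> real) \<Rightarrow> (real \<Rightarrow> real) \<Rightarrow>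
   (real \<Rightarrow> real \<Rightarrow> real) \<Rightarrow> (real \<Rightarrow> real \<Rightarrow> real) \<Rightarrow> (real \<Rightarrow> real \<Rightarrow> real) \<Rightarrow>
   (real \<Rightarrow> real \<Rightarrow> real) \<Rightarrow> (real \<Rightarrow> real \<Rightarrow> real) \<Rightarrow> (real \<Rightarrow> real \<Rightarrow> real) \<Rightarrow>
   (real \<Rightarrow> real \<Rightarrow> real) \<Rightarrow> (real \<Rightarrow> real \<Rightarrow> real) \<Rightarrow> (real \<Rightarrow> real \<Rightarrow> real) \<Rightarrow> bool" where
  "bresse_solution L \<rho>1 \<rho>2 b k k0 ell f1 f2 f3 g1 g2 g3 \<phi> \<psi> w \<phi>x \<psi>x wx \<phi>t \<psi>t wt \<longleftrightarrow>
     (\<forall>t\<ge>0. H10 L (\<phi> t) (\<phi>x t) \<and> H10 L (\<psi> t) (\<psi>x t) \<and> H10 L (w t) (wx t)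
            \<and> sq_int L (\<phi>t t) \<and> sq_int L (\<psi>t t) \<and> sq_int L (wt t)) \<and>
     (\<forall>v v'. H10 L v v' \<longrightarrow> (\<forall>t\<ge>0.
        ipL L (\<phi> t) v = ipL L (\<phi> 0) v + integral {0..t} (\<lambda>s. ipL L (\<phi>t s) v) \<and>
        ipL L (\<psi> t) v = ipL L (\<psi> 0) v + integral {0..t} (\<lambda>s. ipL L (\<psi>t s) v) \<and>
        ipL L (w t) v = ipL L (w 0) v + integral {0..t} (\<lambda>s. ipL L (wt s) v) \<and>
        \<rho>1 * ipL L (\<phi>t t) v = \<rho>1 * ipL L (\<phi>t 0) v + integral {0..t} (\<lambda>s.
            - k * ipL L (\<lambda>x. \<phi>x s x + \<psi> s x + ell * w s x) v'
            + k0 * ell * ipL L (\<lambda>x. wx s x - ell * \<phi> s x) v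
            - ipL L (\<lambda>x. g1 (\<phi>t s x)) v
            - ipL L (\<lambda>x. f1 (\<phi> s x, \<psi> s x, w s x)) v) \<and>
        \<rho>2 * ipL L (\<psi>t t) v = \<rho>2 * ipL L (\<psi>t 0) v + integral {0..t} (\<lambda>s.
            - b * ipL L (\<psi>x s) v'
            - k * ipL L (\<lambda>x. \<phi>x s x + \<psi> s x + ell * w s x) v
            - ipL L (\<lambda>x. g2 (\<psi>t s x)) v
            - ipL L (\<lambda>x. f2 (\<phi> s x, \<psi> s x, w s x)) v) \<and>
        \<rho>1 * ipL L (wt t) v = \<rho>1 * ipL L (wt 0) v + integral {0..t} (\<lambda>s.
            - k0 * ipL L (\<lambda>x. wx s x - ell * \<phi> s x) v'
            - k * ell * ipL L (\<lambda>x. \<phi>x s x + \<psi> s x + ell * w s x) v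
            - ipL L (\<lambda>x. g3 (wt s x)) v
            - ipL L (\<lambda>x. f3 (\<phi> s x, \<psi> s x, w s x)) v)))"

end

theory Submission
  imports Defs
begin

text \<open>
  At each fixed time the lower bound is a pointwise statement about a state. The one analytic
  ingredient is the Poincare inequality \<open>a\<^sup>2 \<integral>u\<^sup>2 \<le> \<integral>u'\<^sup>2\<close> on \<open>H\<^sup>1\<^sub>0(0,L)\<close> for every \<open>a < \<pi>/L\<close>.
  It follows from \<open>0 \<le> \<integral>(u' - q u)\<^sup>2\<close> with \<open>q x = a cot (a (x + \<delta>))\<close>, a solution of the
  Riccati equation \<open>q' = -(a\<^sup>2 + q\<^sup>2)\<close> that stays bounded on \<open>[0,L]\<close>: integrating \<open>2 u u' q\<close> by parts
  turns the cross term into \<open>a\<^sup>2 \<integral>u\<^sup>2 + \<integral>q\<^sup>2u\<^sup>2\<close>. Together with \<open>\<gamma>\<^sub>3\<close> this gives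
  \<open>\<beta> \<integral>(\<phi>\<^sup>2 + \<psi>\<^sup>2 + w\<^sup>2) \<le> (2\<beta>\<gamma>\<^sub>3/a\<^sup>2) E\<^sub>\<ell>\<close>, and the hypothesis on \<open>\<beta>\<close> leaves room for an \<open>a < \<pi>/L\<close>
  with \<open>2\<beta>\<gamma>\<^sub>3 < a\<^sup>2\<close>. Hence \<open>\<beta>\<^sub>0 = 1 - 2\<beta>\<gamma>\<^sub>3/a\<^sup>2\<close>, which does not involve \<open>\<ell>\<close>.
\<close>

lemma integral_lebesgue_on_mult_indicator:
  fixes f :: "real \<Rightarrow> real"
  assumes f: "integrable (lebesgue_on {a..b}) f" and T: "T \<in> sets lebesgue"
  shows "integral\<^sup>L (lebesgue_on {a..b}) (\<lambda>t. f t * of_bool (t \<in> T)) = integral ({a..b} \<inter> T) f"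
proof -
  have "(\<lambda>t. indicator T t * f t) \<in> borel_measurable (lebesgue_on {a..b})"
  proof (rule borel_measurable_times)
    show "indicator T \<in> borel_measurable (lebesgue_on {a..b})"
      using T by (intro measurable_restrict_space1) auto
  qed (use f in auto)
  then have "(\<lambda>t. f t * of_bool (t \<in> T)) \<in> borel_measurable (lebesgue_on {a..b})"
    by (simp add: indicator_def mult.commute)
  then have "integrable (lebesgue_on {a..b}) (\<lambda>t. f t * of_bool (t \<in> T))"
    by (rule Bochner_Integration.integrable_bound[OF f]) auto
  then have "integral\<^sup>L (lebesgue_on {a..b}) (\<lambda>t. f t * of_bool (t \<in> T))
      = integral {a..b} (\<lambda>t. if t \<in> T then f t else 0)"
    by (simp add: lebesgue_integral_eq_integral of_bool_def if_distrib cong: if_cong)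
  also have "\<dots> = integral ({a..b} \<inter> T) f"
    by (simp add: integral_restrict_Int Int_commute)
  finally show ?thesis .
qed

lemma absolutely_integrable_continuous_mult:
  fixes f g :: "real \<Rightarrow> real"
  assumes "continuous_on {a..b} f" "g absolutely_integrable_on {a..b}"
  shows "(\<lambda>x. f x * g x) absolutely_integrable_on {a..b}"
proof (rule absolutely_integrable_bounded_measurable_product_real)
  show "f \<in> borel_measurable (lebesgue_on {a..b})"
    using assms(1) by (intro continuous_imp_measurable_on_sets_lebesgue) auto
  show "bounded (f ` {a..b})"
    using assms(1) by (intro compact_imp_bounded compact_continuous_image) auto
qed (use assms in auto)

lemma integral_mult_indefinite_integral_swap:
  fixes h k :: "real \<Rightarrow> real"
  assumes h: "h absolutely_integrable_on {0..L}" and k: "k absolutely_integrable_on {0..L}"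
  shows "integral {0..L} (\<lambda>x. k x * integral {0..x} h) = integral {0..L} (\<lambda>t. h t * integral {t..L} k)"
proof -
  define M where "M = lebesgue_on {0..L::real}"
  interpret M: finite_measure M unfolding M_def by (rule finite_measure_lebesgue_on) auto
  interpret P: pair_sigma_finite M M by unfold_locales
  have hM: "integrable M h" and kM: "integrable M k"
    using h k by (auto simp: M_def set_integrable_def integrable_restrict_space)
  have [measurable]: "h \<in> borel_measurable M" "k \<in> borel_measurable M" "(\<lambda>x. x) \<in> borel_measurable M"
    using hM kM id_borel_measurable_lebesgue_on by (auto simp: M_def id_def)
  have spM: "space M = {0..L}" by (simp add: M_def)
  define G where "G = (\<lambda>x t. k x * h t * of_bool (t \<le> x))"
  have "integrable (M \<Otimes>\<^sub>M M) (\<lambda>(x,t). k x * h t)"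
    by (rule P.Fubini_integrable) (use hM kM in \<open>auto simp: abs_mult\<close>)
  then have G: "integrable (M \<Otimes>\<^sub>M M) (\<lambda>(x,t). G x t)"
    by (rule Bochner_Integration.integrable_bound) (auto simp: G_def abs_mult)
  have inner_t: "(\<integral>t. G x t \<partial>M) = k x * integral {0..x} h" if "x \<in> {0..L}" for x
  proof -
    have "(\<integral>t. G x t \<partial>M) = k x * (\<integral>t. h t * of_bool (t \<in> {..x}) \<partial>M)"
      unfolding G_def by (simp add: mult.assoc)
    also have "(\<integral>t. h t * of_bool (t \<in> {..x}) \<partial>M) = integral ({0..L} \<inter> {..x}) h"
      unfolding M_def by (rule integral_lebesgue_on_mult_indicator) (use hM M_def in auto)
    also have "{0..L} \<inter> {..x} = {0..x}" using that by auto
    finally show ?thesis .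
  qed
  have inner_x: "(\<integral>x. G x t \<partial>M) = h t * integral {t..L} k" if "t \<in> {0..L}" for t
  proof -
    have "(\<integral>x. G x t \<partial>M) = h t * (\<integral>x. k x * of_bool (x \<in> {t..}) \<partial>M)"
      unfolding G_def by (simp add: mult_ac)
    also have "(\<integral>x. k x * of_bool (x \<in> {t..}) \<partial>M) = integral ({0..L} \<inter> {t..}) k"
      unfolding M_def by (rule integral_lebesgue_on_mult_indicator) (use kM M_def in auto)
    also have "{0..L} \<inter> {t..} = {t..L}" using that by auto
    finally show ?thesis .
  qed
  have "integrable M (\<lambda>x. k x * integral {0..x} h)"
    using P.integrable_fst[OF G] inner_t by (subst Bochner_Integration.integrable_cong) (auto simp: spM)
  moreover have "integrable M (\<lambda>t. h t * integral {t..L} k)"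
    using P.integrable_snd[OF G] inner_x by (subst Bochner_Integration.integrable_cong) (auto simp: spM)
  moreover have "(\<integral>x. k x * integral {0..x} h \<partial>M) = (\<integral>t. h t * integral {t..L} k \<partial>M)"
  proof -
    have "(\<integral>x. k x * integral {0..x} h \<partial>M) = (\<integral>x. (\<integral>t. G x t \<partial>M) \<partial>M)"
      using inner_t by (intro Bochner_Integration.integral_cong) (auto simp: spM)
    also have "\<dots> = (\<integral>t. (\<integral>x. G x t \<partial>M) \<partial>M)"
      by (rule P.Fubini_integral[OF G, symmetric])
    also have "\<dots> = (\<integral>t. h t * integral {t..L} k \<partial>M)"
      using inner_x by (intro Bochner_Integration.integral_cong) (auto simp: spM)
    finally show ?thesis .
  qed
  ultimately show ?thesis by (simp add: M_def lebesgue_integral_eq_integral)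
qed

lemma integration_by_parts_indefinite_integrals:
  fixes h k :: "real \<Rightarrow> real"
  assumes h: "h absolutely_integrable_on {0..L}" and k: "k absolutely_integrable_on {0..L}"
  shows "integral {0..L} (\<lambda>x. k x * integral {0..x} h) + integral {0..L} (\<lambda>t. h t * integral {0..t} k)
         = integral {0..L} k * integral {0..L} h"
proof -
  have ki: "k integrable_on {0..L}" and hi: "h integrable_on {0..L}"
    using h k set_lebesgue_integral_eq_integral(1) by blast+
  have "(\<lambda>t. integral {0..t} k * h t) absolutely_integrable_on {0..L}"
    using indefinite_integral_continuous_1[OF ki] h by (rule absolutely_integrable_continuous_mult)
  then have hKi: "(\<lambda>t. h t * integral {0..t} k) integrable_on {0..L}"
    using set_lebesgue_integral_eq_integral(1) by (simp add: mult.commute)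
  have split: "h t * integral {t..L} k = integral {0..L} k * h t - h t * integral {0..t} k"
    if "t \<in> {0..L}" for t
  proof -
    have e: "integral {0..t} k + integral {t..L} k = integral {0..L} k"
      using that ki by (intro Henstock_Kurzweil_Integration.integral_combine) auto
    show ?thesis by (simp add: algebra_simps flip: e)
  qed
  have "integral {0..L} (\<lambda>x. k x * integral {0..x} h) = integral {0..L} (\<lambda>t. h t * integral {t..L} k)"
    by (rule integral_mult_indefinite_integral_swap[OF h k])
  also have "\<dots> = integral {0..L} (\<lambda>t. integral {0..L} k * h t - h t * integral {0..t} k)"
    by (rule integral_cong) (use split in auto)
  also have "\<dots> = integral {0..L} k * integral {0..L} h - integral {0..L} (\<lambda>t. h t * integral {0..t} k)"
    using hi hKi by (simp add: integral_diff integrable_on_mult_right)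
  finally show ?thesis by simp
qed

lemma square_indefinite_integral:
  fixes f :: "real \<Rightarrow> real"
  assumes f: "f absolutely_integrable_on {0..L}" and x: "x \<in> {0..L}"
  shows "(integral {0..x} f)^2 = integral {0..x} (\<lambda>t. 2 * f t * integral {0..t} f)"
proof -
  have fx: "f absolutely_integrable_on {0..x}"
    using absolutely_integrable_on_subcbox[where f=f and S="{0..L}" and a=0 and b=x] f x by auto
  then have "f integrable_on {0..x}" using set_lebesgue_integral_eq_integral(1) by blast
  from indefinite_integral_continuous_1[OF this] fx
  have "(\<lambda>t. integral {0..t} f * f t) absolutely_integrable_on {0..x}"
    by (rule absolutely_integrable_continuous_mult)
  then have "(\<lambda>t. f t * integral {0..t} f) integrable_on {0..x}"
    using set_lebesgue_integral_eq_integral(1) by (simp add: mult.commute)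
  then show ?thesis
    using integration_by_parts_indefinite_integrals[OF fx fx]
    by (simp add: power2_eq_square mult.assoc)
qed

lemma integral_square_indefinite_by_parts:
  fixes f q q' :: "real \<Rightarrow> real"
  assumes f: "f absolutely_integrable_on {0..L}" and f0: "integral {0..L} f = 0"
    and q: "\<And>x. x \<in> {0..L} \<Longrightarrow> (q has_real_derivative q' x) (at x within {0..L})"
    and q': "continuous_on {0..L} q'"
  shows "integral {0..L} (\<lambda>x. q' x * (integral {0..x} f)^2)
         + integral {0..L} (\<lambda>t. 2 * f t * integral {0..t} f * q t) = 0"
proof (cases "0 \<le> L")
  case L: True
  define U where "U x = integral {0..x} f" for x
  define h where "h = (\<lambda>t. 2 * f t * U t)"
  have "f integrable_on {0..L}" using f set_lebesgue_integral_eq_integral(1) by blast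
  then have Uc: "continuous_on {0..L} U" unfolding U_def by (rule indefinite_integral_continuous_1)
  have qc: "continuous_on {0..L} q" using q by (rule DERIV_continuous_on)
  have "(\<lambda>t. (2 * U t) * f t) absolutely_integrable_on {0..L}"
    by (intro absolutely_integrable_continuous_mult continuous_intros Uc f)
  then have h: "h absolutely_integrable_on {0..L}" by (simp add: h_def mult_ac)
  then have hi: "h integrable_on {0..L}" using set_lebesgue_integral_eq_integral(1) by blast
  have "(\<lambda>t. q t * h t) absolutely_integrable_on {0..L}"
    using qc h by (rule absolutely_integrable_continuous_mult)
  then have hqi: "(\<lambda>t. h t * q t) integrable_on {0..L}"
    using set_lebesgue_integral_eq_integral(1) by (simp add: mult.commute)
  have hU: "integral {0..x} h = (U x)^2" if "x \<in> {0..L}" for x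
    using square_indefinite_integral[OF f that] by (simp add: h_def U_def)
  have h0: "integral {0..L} h = 0" using hU[of L] L f0 by (simp add: U_def)
  have q'q: "integral {0..t} q' = q t - q 0" if "t \<in> {0..L}" for t
  proof (rule integral_unique, rule fundamental_theorem_of_calculus)
    show "0 \<le> t" using that by simp
    show "(q has_vector_derivative q' y) (at y within {0..t})" if "y \<in> {0..t}" for y
      using \<open>t \<in> {0..L}\<close> that q[of y] DERIV_subset[of q "q' y" y "{0..L}" "{0..t}"]
      by (simp add: has_real_derivative_iff_has_vector_derivative)
  qed
  have "integral {0..L} (\<lambda>x. q' x * integral {0..x} h) + integral {0..L} (\<lambda>t. h t * integral {0..t} q')
        = integral {0..L} q' * integral {0..L} h"
    by (rule integration_by_parts_indefinite_integrals[OF h absolutely_integrable_continuous_real[OF q']])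
  moreover have "integral {0..L} (\<lambda>x. q' x * integral {0..x} h) = integral {0..L} (\<lambda>x. q' x * (U x)^2)"
    by (rule integral_cong) (simp add: hU)
  moreover have "integral {0..L} (\<lambda>t. h t * integral {0..t} q') = integral {0..L} (\<lambda>t. h t * q t - q 0 * h t)"
    by (rule integral_cong) (simp add: q'q algebra_simps)
  moreover have "\<dots> = integral {0..L} (\<lambda>t. h t * q t)"
    using hi hqi h0 by (simp add: integral_diff integrable_on_mult_right)
  ultimately show ?thesis using h0 by (simp add: U_def h_def)
qed simp

lemma has_real_derivative_scaled_cot:
  fixes a \<delta> x :: real
  assumes "sin (a * (x + \<delta>)) \<noteq> 0"
  shows "((\<lambda>x. a * cos (a * (x + \<delta>)) / sin (a * (x + \<delta>))) has_real_derivative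
           - (a^2 + (a * cos (a * (x + \<delta>)) / sin (a * (x + \<delta>)))^2)) (at x)"
proof -
  let ?s = "sin (a * (x + \<delta>))" and ?c = "cos (a * (x + \<delta>))"
  have "((\<lambda>x. a * cos (a * (x + \<delta>)) / sin (a * (x + \<delta>))) has_real_derivative
           (a * (- ?s * (a * 1)) * ?s - a * ?c * (?c * (a * 1))) / (?s * ?s)) (at x)"
    using assms by (auto intro!: derivative_eq_intros)
  moreover have "?s^2 + ?c^2 = 1" by simp
  then have "(a * (- ?s * (a * 1)) * ?s - a * ?c * (?c * (a * 1))) / (?s * ?s) = - (a^2 + (a * ?c / ?s)^2)"
    using assms by (simp add: field_simps power2_eq_square)
  ultimately show ?thesis by simp
qed

lemma wirtinger_indefinite_integral:
  fixes f :: "real \<Rightarrow> real" and a L :: real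
  assumes f: "f absolutely_integrable_on {0..L}" and f2: "(\<lambda>x. (f x)^2) integrable_on {0..L}"
    and f0: "integral {0..L} f = 0" and a: "a > 0" "a * L < pi"
  shows "a^2 * integral {0..L} (\<lambda>x. (integral {0..x} f)^2) \<le> integral {0..L} (\<lambda>x. (f x)^2)"
proof -
  define U where "U x = integral {0..x} f" for x
  define \<delta> where "\<delta> = (pi / a - L) / 2"
  define q where "q x = a * cos (a * (x + \<delta>)) / sin (a * (x + \<delta>))" for x
  \<comment> \<open>the shift \<open>\<delta> > 0\<close> keeps \<open>a (x + \<delta>)\<close> inside \<open>(0, \<pi>)\<close>, so \<open>q\<close> has no pole on \<open>[0,L]\<close>\<close>
  have "sin (a * (x + \<delta>)) > 0" if "x \<in> {0..L}" for x
  proof (rule sin_gt_zero)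
    have shift: "a * (x + \<delta>) = a * x + (pi - a * L) / 2"
      using a by (simp add: \<delta>_def field_simps)
    have "0 \<le> a * x" "a * x \<le> a * L"
      using a that by (auto intro: mult_left_mono)
    with a(2) show "0 < a * (x + \<delta>)" unfolding shift by argo
    with a(2) \<open>a * x \<le> a * L\<close> show "a * (x + \<delta>) < pi" unfolding shift by argo
  qed
  then have q: "(q has_real_derivative - (a^2 + (q x)^2)) (at x)" if "x \<in> {0..L}" for x
    using has_real_derivative_scaled_cot[of a x \<delta>] that unfolding q_def by force
  then have qc: "continuous_on {0..L} q"
    by (intro continuous_at_imp_continuous_on ballI DERIV_isCont) auto
  have "f integrable_on {0..L}" using f set_lebesgue_integral_eq_integral(1) by blast
  then have Uc: "continuous_on {0..L} U" unfolding U_def by (rule indefinite_integral_continuous_1)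
  have parts: "integral {0..L} (\<lambda>x. - (a^2 + (q x)^2) * (U x)^2)
      + integral {0..L} (\<lambda>t. 2 * f t * U t * q t) = 0"
    unfolding U_def
  proof (rule integral_square_indefinite_by_parts[OF f f0])
    show "(q has_real_derivative - (a^2 + (q x)^2)) (at x within {0..L})" if "x \<in> {0..L}" for x
      using q[OF that] by (rule has_field_derivative_at_within)
    show "continuous_on {0..L} (\<lambda>x. - (a^2 + (q x)^2))"
      by (intro continuous_intros qc)
  qed
  have U2i: "(\<lambda>x. (U x)^2) integrable_on {0..L}"
    and qU2i: "(\<lambda>x. (q x)^2 * (U x)^2) integrable_on {0..L}"
    by (intro integrable_continuous_interval continuous_intros Uc qc)+
  have "(\<lambda>x. q x * (2 * U x) * f x) absolutely_integrable_on {0..L}"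
    by (intro absolutely_integrable_continuous_mult continuous_intros qc Uc f)
  then have fUqi: "(\<lambda>t. 2 * f t * U t * q t) integrable_on {0..L}"
    using set_lebesgue_integral_eq_integral(1) by (simp add: mult_ac)
  have "integral {0..L} (\<lambda>x. - (a^2 + (q x)^2) * (U x)^2)
      = - (a^2 * integral {0..L} (\<lambda>x. (U x)^2)) - integral {0..L} (\<lambda>x. (q x)^2 * (U x)^2)"
    using U2i qU2i by (simp add: algebra_simps integral_diff integral_neg integrable_neg integrable_on_mult_right)
  with parts have cross: "integral {0..L} (\<lambda>x. 2 * f x * U x * q x)
      = a^2 * integral {0..L} (\<lambda>x. (U x)^2) + integral {0..L} (\<lambda>x. (q x)^2 * (U x)^2)"
    by linarith
  have expand: "(f x - q x * U x)^2 = (f x)^2 - 2 * f x * U x * q x + (q x)^2 * (U x)^2" for x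
    by (simp add: power2_eq_square algebra_simps)
  have "(\<lambda>x. (f x)^2 - 2 * f x * U x * q x + (q x)^2 * (U x)^2) integrable_on {0..L}"
    by (intro integrable_add integrable_diff f2 fUqi qU2i)
  then have "0 \<le> integral {0..L} (\<lambda>x. (f x)^2 - 2 * f x * U x * q x + (q x)^2 * (U x)^2)"
    by (rule integral_nonneg) (simp flip: expand)
  also have "\<dots> = integral {0..L} (\<lambda>x. (f x)^2) - integral {0..L} (\<lambda>x. 2 * f x * U x * q x)
      + integral {0..L} (\<lambda>x. (q x)^2 * (U x)^2)"
    using f2 fUqi qU2i by (simp add: integral_add integral_diff integrable_diff)
  also have "\<dots> = integral {0..L} (\<lambda>x. (f x)^2) - a^2 * integral {0..L} (\<lambda>x. (U x)^2)"
    by (simp add: cross)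
  finally show ?thesis by (simp add: U_def)
qed

lemma H10_continuous:
  assumes "H10 L u u'"
  shows "continuous_on {0..L} u"
proof -
  have "u' integrable_on {0..L}"
    using assms set_lebesgue_integral_eq_integral(1) by (auto simp: H10_def)
  then have "continuous_on {0..L} (\<lambda>x. integral {0..x} u')"
    by (rule indefinite_integral_continuous_1)
  then show ?thesis
    using assms unfolding H10_def by (metis (no_types, lifting) continuous_on_cong)
qed

lemma H10_poincare:
  assumes u: "H10 L u u'" and L: "0 \<le> L" and a: "a > 0" "a * L < pi"
  shows "a^2 * integral {0..L} (\<lambda>x. (u x)^2) \<le> sqn L u'"
proof -
  have u_eq: "\<And>x. x \<in> {0..L} \<Longrightarrow> u x = integral {0..x} u'" and "u L = 0"
    using u by (auto simp: H10_def)
  then have "integral {0..L} u' = 0" using L by simp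
  moreover have "integral {0..L} (\<lambda>x. (u x)^2) = integral {0..L} (\<lambda>x. (integral {0..x} u')^2)"
    by (rule integral_cong) (simp add: u_eq)
  ultimately show ?thesis
    using u a wirtinger_indefinite_integral[where f=u' and L=L and a=a]
    by (simp add: H10_def sq_int_def sqn_def)
qed

lemma sqn_nonneg: "sq_int L f \<Longrightarrow> 0 \<le> sqn L f"
  unfolding sqn_def sq_int_def by (auto intro: integral_nonneg)

lemma integral_potential_ge:
  fixes F :: "real \<times> real \<times> real \<Rightarrow> real"
  assumes "0 \<le> L" and F: "continuous_on UNIV F"
    and p: "continuous_on {0..L} p" and s: "continuous_on {0..L} s" and w: "continuous_on {0..L} w"
    and F_ge: "\<And>u v w. F (u, v, w) \<ge> - \<beta> * (u^2 + v^2 + w^2) - mF"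
  shows "- \<beta> * integral {0..L} (\<lambda>x. (p x)^2 + (s x)^2 + (w x)^2) - L * mF
         \<le> integral {0..L} (\<lambda>x. F (p x, s x, w x))"
proof -
  have "(\<lambda>x. (p x)^2 + (s x)^2 + (w x)^2) integrable_on {0..L}"
    by (intro integrable_continuous_interval continuous_intros p s w)
  then have "((\<lambda>x. - \<beta> * ((p x)^2 + (s x)^2 + (w x)^2) - mF) has_integral
      - \<beta> * integral {0..L} (\<lambda>x. (p x)^2 + (s x)^2 + (w x)^2) - L * mF) {0..L}"
    using has_integral_const_real[of mF 0 L] \<open>0 \<le> L\<close>
    by (intro has_integral_diff has_integral_mult_right integrable_integral) (auto simp: mult.commute)
  moreover have "(\<lambda>x. F (p x, s x, w x)) integrable_on {0..L}"
    by (intro integrable_continuous_interval continuous_on_compose2[OF F] continuous_intros p s w) auto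
  ultimately show ?thesis
    using F_ge by (blast intro: has_integral_le integrable_integral)
qed

lemma bresse_E_plus_potential_ge:
  fixes F :: "real \<times> real \<times> real \<Rightarrow> real"
  assumes hp: "H10 L p px" and hs: "H10 L s sx" and hw: "H10 L w wx"
    and "sq_int L pt" "sq_int L st" "sq_int L wt"
    and \<gamma>3: "gamma3_ok L b k k0 ell \<gamma>3"
    and L: "0 \<le> L" and "\<rho>1 \<ge> 0" "\<rho>2 \<ge> 0" "\<gamma>3 \<ge> 0" "\<beta> \<ge> 0" and a: "a > 0" "a * L < pi"
    and F: "continuous_on UNIV F"
    and F_ge: "\<And>u v w. F (u, v, w) \<ge> - \<beta> * (u^2 + v^2 + w^2) - mF"
  defines "E \<equiv> bresse_E L \<rho>1 \<rho>2 b k k0 ell p s w px sx wx pt st wt"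
  shows "E + integral {0..L} (\<lambda>x. F (p x, s x, w x)) \<ge> (1 - 2 * \<beta> * \<gamma>3 / a^2) * E - L * mF"
proof -
  define P where "P = b * sqn L sx + k * sqn L (\<lambda>x. px x + s x + ell * w x) + k0 * sqn L (\<lambda>x. wx x - ell * p x)"
  define K where "K = \<rho>1 * sqn L pt + \<rho>2 * sqn L st + \<rho>1 * sqn L wt"
  define I where "I = integral {0..L} (\<lambda>x. (p x)^2 + (s x)^2 + (w x)^2)"
  have E: "E = (K + P) / 2" by (simp add: E_def K_def P_def bresse_E_def)
  have "K \<ge> 0" using assms by (simp add: K_def sqn_nonneg)
  have "a^2 * I \<le> sqn L px + sqn L sx + sqn L wx"
  proof -
    have "I = integral {0..L} (\<lambda>x. (p x)^2) + integral {0..L} (\<lambda>x. (s x)^2) + integral {0..L} (\<lambda>x. (w x)^2)"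
      unfolding I_def using H10_continuous[OF hp] H10_continuous[OF hs] H10_continuous[OF hw]
      by (simp add: integral_add integrable_add integrable_continuous_interval continuous_intros)
    then show ?thesis
      using H10_poincare[OF hp L a] H10_poincare[OF hs L a] H10_poincare[OF hw L a]
      by (simp add: distrib_left add_mono)
  qed
  also have "\<dots> \<le> \<gamma>3 * P"
    using \<gamma>3 hp hs hw unfolding gamma3_ok_def P_def by blast
  also have "\<dots> \<le> \<gamma>3 * (2 * E)"
    unfolding E using \<open>K \<ge> 0\<close> \<open>\<gamma>3 \<ge> 0\<close> by (intro mult_left_mono) auto
  finally have "\<beta> * (a^2 * I) \<le> \<beta> * (\<gamma>3 * (2 * E))"
    using \<open>\<beta> \<ge> 0\<close> by (rule mult_left_mono)
  then have "\<beta> * I \<le> 2 * \<beta> * \<gamma>3 / a^2 * E"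
    using \<open>a > 0\<close> by (simp add: field_simps)
  moreover have "- \<beta> * I - L * mF \<le> integral {0..L} (\<lambda>x. F (p x, s x, w x))"
    unfolding I_def using assms
    by (intro integral_potential_ge H10_continuous hp hs hw) auto
  ultimately show ?thesis by (simp add: algebra_simps)
qed

lemma exists_frequency_below:
  fixes c L :: real
  assumes "L > 0" "c \<ge> 0" "c * L^2 < pi^2"
  shows "\<exists>a>0. a * L < pi \<and> c < a^2"
proof -
  have "sqrt c < pi / L"
    using assms by (intro real_less_lsqrt) (auto simp: power_divide field_simps)
  define a where "a = (sqrt c + pi / L) / 2"
  have "sqrt c < a" "a < pi / L" using \<open>sqrt c < pi / L\<close> unfolding a_def by argo+
  have "a > 0"
    using \<open>sqrt c < a\<close> real_sqrt_ge_zero[OF assms(2)] by linarith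
  have "(sqrt c)^2 < a^2"
    using \<open>sqrt c < a\<close> assms(2) by (intro power_strict_mono) auto
  then have "c < a^2" using assms(2) by simp
  moreover have "a * L < pi" using \<open>a < pi / L\<close> assms(1) by (simp add: field_simps)
  ultimately show ?thesis using \<open>a > 0\<close> by blast
qed

theorem lemma2p1:
  fixes L \<rho>1 \<rho>2 b k k0 \<beta> mF \<gamma>3 :: real
    and F f1 f2 f3 :: "real \<times> real \<times> real \<Rightarrow> real"
    and g1 g2 g3 :: "real \<Rightarrow> real"
  assumes "L > 0" "\<rho>1 > 0" "\<rho>2 > 0" "b > 0" "k > 0" "k0 > 0"
    and grad: "\<And>p. (F has_derivative
                 (\<lambda>h. f1 p * fst h + f2 p * fst (snd h) + f3 p * snd (snd h))) (at p)"
    and C1_f1: "\<exists>D. (\<forall>p. (f1 has_derivative blinfun_apply (D p)) (at p)) \<and> continuous_on UNIV D"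
    and C1_f2: "\<exists>D. (\<forall>p. (f2 has_derivative blinfun_apply (D p)) (at p)) \<and> continuous_on UNIV D"
    and C1_f3: "\<exists>D. (\<forall>p. (f3 has_derivative blinfun_apply (D p)) (at p)) \<and> continuous_on UNIV D"
    and "\<gamma>3 > 0" "\<beta> \<ge> 0" "mF \<ge> 0" "\<beta> < pi^2 / (2 * \<gamma>3 * L^2)"
    and Flow: "\<And>u v w. F (u, v, w) \<ge> - \<beta> * (u^2 + v^2 + w^2) - mF"
  shows "\<exists>\<beta>0 > 0. \<forall>ell > 0. gamma3_ok L b k k0 ell \<gamma>3 \<longrightarrow>
           (\<forall>\<phi> \<psi> w \<phi>x \<psi>x wx \<phi>t \<psi>t wt.
              bresse_solution L \<rho>1 \<rho>2 b k k0 ell f1 f2 f3 g1 g2 g3 \<phi> \<psi> w \<phi>x \<psi>x wx \<phi>t \<psi>t wt \<longrightarrow>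
              (\<forall>t\<ge>0.
                 bresse_E L \<rho>1 \<rho>2 b k k0 ell (\<phi> t) (\<psi> t) (w t) (\<phi>x t) (\<psi>x t) (wx t) (\<phi>t t) (\<psi>t t) (wt t)
                   + integral {0..L} (\<lambda>x. F (\<phi> t x, \<psi> t x, w t x))
                 \<ge> \<beta>0 * bresse_E L \<rho>1 \<rho>2 b k k0 ell (\<phi> t) (\<psi> t) (w t) (\<phi>x t) (\<psi>x t) (wx t) (\<phi>t t) (\<psi>t t) (wt t)
                   - L * mF))"
proof -
  have "2 * \<beta> * \<gamma>3 * L^2 < pi^2"
    using assms(1,11,14) by (simp add: field_simps)
  then obtain a where a: "a > 0" "a * L < pi" and a_gt: "2 * \<beta> * \<gamma>3 < a^2"
    using exists_frequency_below[of L "2 * \<beta> * \<gamma>3"] assms(1,11,12) by auto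
  \<comment> \<open>of the regularity hypotheses on \<open>F, f\<^sub>1, f\<^sub>2, f\<^sub>3\<close> only the continuity of \<open>F\<close> is needed\<close>
  have F: "continuous_on UNIV F"
    using grad has_derivative_continuous by (blast intro: continuous_at_imp_continuous_on)
  show ?thesis
  proof (intro exI[of _ "1 - 2 * \<beta> * \<gamma>3 / a^2"] conjI allI impI)
    show "0 < 1 - 2 * \<beta> * \<gamma>3 / a^2" using a_gt a by (simp add: field_simps)
    fix ell \<phi> \<psi> w \<phi>x \<psi>x wx \<phi>t \<psi>t wt and t :: real
    assume "gamma3_ok L b k k0 ell \<gamma>3"
      and "bresse_solution L \<rho>1 \<rho>2 b k k0 ell f1 f2 f3 g1 g2 g3 \<phi> \<psi> w \<phi>x \<psi>x wx \<phi>t \<psi>t wt"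
      and "0 \<le> t"
    then show "bresse_E L \<rho>1 \<rho>2 b k k0 ell (\<phi> t) (\<psi> t) (w t) (\<phi>x t) (\<psi>x t) (wx t) (\<phi>t t) (\<psi>t t) (wt t)
                 + integral {0..L} (\<lambda>x. F (\<phi> t x, \<psi> t x, w t x))
               \<ge> (1 - 2 * \<beta> * \<gamma>3 / a^2) * bresse_E L \<rho>1 \<rho>2 b k k0 ell (\<phi> t) (\<psi> t) (w t) (\<phi>x t) (\<psi>x t) (wx t) (\<phi>t t) (\<psi>t t) (wt t)
                 - L * mF"
      using assms a F Flow unfolding bresse_solution_def
      by (intro bresse_E_plus_potential_ge) auto
  qed
qed

end
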